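(* Suppose $\beta_j\ne0$ for $j=2,\dots,k$ in the Lanczos process, and let $T_k=Y\Theta Y^{\top}$ with $Y=[y_1,\dots,y_k]$ orthogonal and $\Theta=\operatorname{diag}(\vartheta_1,\dots,\vartheta_k)$. Then the optimal value $\mu^{(k)}$ of rLGopt is the smallest root of the secular function $\widehat\chi(\lambda)=\|b_0\|^2e_1^{\top}(T_k-\lambda I)^{-2}e_1-\gamma^2=\sum_{i=1}^k\frac{\zeta_i^2}{(\lambda-\vartheta_i)^2}-\gamma^2$, where $\zeta_i=\|b_0\|e_1^{\top}y_i$. Furthermore, $(\mu^{(k)},x^{(k)})=(\mu^{(k)},-\|b_0\|(T_k-\mu^{(k)}I)^{-1}e_1)$ is a minimizer of rLGopt.
   Context: Let $M\in\mathbb{R}^{n\times n}$ be symmetric (in the paper $M=PAP$) and $0\ne b_0\in\mathbb{R}^n$, $\gamma>0$. Lanczos process: $q_0=0$, $\beta_1=\|b_0\|$, $q_1=b_0/\|b_0\|$, for $j=1,2,\dots$: $\alpha_j=q_j^{\top}Mq_j$, $\widehat q_{j+1}=Mq_j-\alpha_jq_j-\beta_jq_{j-1}$, $\beta_{j+1}=\|\widehat q_{j+1}\|$, $q_{j+1}=\widehat q_{j+1}/\beta_{j+1}$ when $\beta_{j+1}>0$. $T_k$ is the $k\times k$ symmetric tridiagonal matrix with diagonal $\alpha_1,\dots,\alpha_k$ and off-diagonal entries $\beta_2,\dots,\beta_k$. rLGopt: minimize $\lambda$ over $(\lambda,x)\in\mathbb{R}\times\mathbb{R}^k$ with $(T_k-\lambda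 I)x=-\|b_0\|e_1$ and $\|x\|=\gamma$. *)

theory Defs
  imports "Jordan_Normal_Form.Matrix"
begin

definition vnorm :: "real vec \<Rightarrow> real" where
  "vnorm v = sqrt (v \<bullet> v)"

definition minv :: "real mat \<Rightarrow> real mat" where
  "minv A = (THE B. B \<in> carrier_mat (dim_row A) (dim_row A) \<and>
                    A * B = 1\<^sub>m (dim_row A) \<and> B * A = 1\<^sub>m (dim_row A))"

text \<open>Lanczos state after step j: (q_j, q_(j+1), beta_(j+1)).\<close>
fun lanczos_state :: "real mat \<Rightarrow> real vec \<Rightarrow> nat \<Rightarrow> real vec \<times> real vec \<times> real" where
  "lanczos_state M b0 0 =
     (0\<^sub>v (dim_vec b0), (1 / vnorm b0) \<cdot>\<^sub>v b0, vnorm b0)"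
| "lanczos_state M b0 (Suc j) =
     (let (qp, qc, bc) = lanczos_state M b0 j;
          a = qc \<bullet> (M *\<^sub>v qc);
          qh = M *\<^sub>v qc - a \<cdot>\<^sub>v qc - bc \<cdot>\<^sub>v qp;
          bn = vnorm qh;
          qn = (if bn > 0 then (1 / bn) \<cdot>\<^sub>v qh else 0\<^sub>v (dim_vec b0))
      in (qc, qn, bn))"

definition lanczos_q :: "real mat \<Rightarrow> real vec \<Rightarrow> nat \<Rightarrow> real vec" where
  "lanczos_q M b0 j = fst (lanczos_state M b0 j)"

definition lanczos_beta :: "real mat \<Rightarrow> real vec \<Rightarrow> nat \<Rightarrow> real" where
  "lanczos_beta M b0 j = snd (snd (lanczos_state M b0 (j - 1)))"

definition lanczos_alpha :: "real mat \<Rightarrow> real vec \<Rightarrow> nat \<Rightarrow> real" where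
  "lanczos_alpha M b0 j = lanczos_q M b0 j \<bullet> (M *\<^sub>v lanczos_q M b0 j)"

text \<open>T_k, k x k symmetric tridiagonal; 0-based entry (i,j) corresponds to
  1-based (i+1, j+1): diagonal alpha_(i+1), off-diagonal beta_(max i j + 1).\<close>
definition lanczos_T :: "real mat \<Rightarrow> real vec \<Rightarrow> nat \<Rightarrow> real mat" where
  "lanczos_T M b0 k = mat k k (\<lambda>(i, j).
     if i = j then lanczos_alpha M b0 (i + 1)
     else if j = i + 1 \<or> i = j + 1 then lanczos_beta M b0 (max i j + 1)
     else 0)"

definition rLGopt_feasible :: "real mat \<Rightarrow> real vec \<Rightarrow> real \<Rightarrow> nat \<Rightarrow> (real \<times> real vec) set" where
  "rLGopt_feasible M b0 \<gamma> k = {(lam, x). x \<in> carrier_vec k \<and>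
      (lanczos_T M b0 k - lam \<cdot>\<^sub>m 1\<^sub>m k) *\<^sub>v x = (- vnorm b0) \<cdot>\<^sub>v unit_vec k 0 \<and>
      vnorm x = \<gamma>}"

end

theory Submission
  imports Defs "Jordan_Normal_Form.Determinant"
begin

(* In the eigenbasis z = Y^T x of T_k, the constraint (T_k - lambda I) x = -norm b0 e_1 decouples
   into (theta_i - lambda) z_i = -zeta_i.  An unreduced tridiagonal matrix has no eigenvector with
   vanishing first component, so every zeta_i is nonzero; hence every feasible lambda avoids the
   spectrum and satisfies norm x ^ 2 = sum_i zeta_i^2 / (lambda - theta_i)^2 = gamma^2, i.e. it is a
   root of the secular function.  Below min theta_i the secular sum increases strictly from 0 to
   infinity, so it has a root mu there, and mu is smaller than every other root.  Conversely
   x = -norm b0 (T_k - mu I)^-1 e_1 solves the constraint with norm x = gamma. *)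

lemma scalar_prod_self_nonneg: "0 \<le> (v :: real vec) \<bullet> v"
  by (simp add: scalar_prod_def sum_nonneg)

lemma scalar_prod_self_eq_0_iff:
  assumes "(v :: real vec) \<in> carrier_vec n"
  shows "v \<bullet> v = 0 \<longleftrightarrow> v = 0\<^sub>v n"
proof
  assume "v \<bullet> v = 0"
  then have "\<forall>i\<in>{0..<n}. v $ i * v $ i = 0"
    using assms by (subst sum_nonneg_eq_0_iff[symmetric]) (auto simp: scalar_prod_def)
  then show "v = 0\<^sub>v n"
    using assms by (intro eq_vecI) auto
qed (use assms in simp)

lemma vnorm_pos: "(v :: real vec) \<in> carrier_vec n \<Longrightarrow> v \<noteq> 0\<^sub>v n \<Longrightarrow> 0 < vnorm v"
  using scalar_prod_self_nonneg[of v] scalar_prod_self_eq_0_iff[of v n]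
  by (simp add: vnorm_def)

lemma vnorm_eq_iff: "0 \<le> c \<Longrightarrow> vnorm v = c \<longleftrightarrow> v \<bullet> v = c\<^sup>2"
  using scalar_prod_self_nonneg[of v] by (auto simp: vnorm_def)

lemma minv_eqI:
  assumes A: "A \<in> carrier_mat n n" and B: "B \<in> carrier_mat n n"
    and AB: "A * B = 1\<^sub>m n" and BA: "B * A = 1\<^sub>m n"
  shows "minv A = B"
  unfolding minv_def
proof (rule the_equality)
  fix C assume "C \<in> carrier_mat (dim_row A) (dim_row A) \<and>
    A * C = 1\<^sub>m (dim_row A) \<and> C * A = 1\<^sub>m (dim_row A)"
  then have C: "C \<in> carrier_mat n n" and CA: "C * A = 1\<^sub>m n"
    using A by auto
  have "C = (C * A) * B"
    using A B C AB by (simp add: assoc_mult_mat[of C n n A n B n])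
  then show "C = B"
    using CA B by simp
qed (use A B AB BA in auto)

lemma mat_diag_eq_mat: "mat_diag k f = mat k k (\<lambda>(i, j). if i = j then f i else 0)"
  unfolding mat_diag_def by (rule cong[of "mat k k"]) auto

lemma transpose_mat_diag: "transpose_mat (mat_diag k f) = mat_diag k f"
  unfolding mat_diag_def by (rule eq_matI) auto

lemma mat_diag_cong: "(\<And>i. i < k \<Longrightarrow> f i = g i) \<Longrightarrow> mat_diag k f = mat_diag k g"
  unfolding mat_diag_def by (rule eq_matI) auto

lemma mat_diag_minus_smult_one:
  fixes f :: "nat \<Rightarrow> 'a :: ring_1"
  shows "mat_diag k f - c \<cdot>\<^sub>m 1\<^sub>m k = mat_diag k (\<lambda>i. f i - c)"
  unfolding mat_diag_def by (rule eq_matI) auto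

lemma mat_diag_mult_vec_index:
  assumes "v \<in> carrier_vec k" and "i < k"
  shows "(mat_diag k f *\<^sub>v v) $ i = f i * v $ i"
proof -
  have "(mat_diag k f *\<^sub>v v) $ i = (\<Sum>l\<in>{0..<k}. (if i = l then f l else 0) * v $ l)"
    using assms by (simp add: mat_diag_def scalar_prod_def)
  also have "\<dots> = (\<Sum>l\<in>{0..<k}. if l = i then f i * v $ i else 0)"
    by (rule sum.cong) auto
  finally show ?thesis
    using assms by simp
qed

lemma transpose_mult_smult_unit_vec_index:
  fixes A :: "'a :: comm_ring_1 mat"
  assumes "A \<in> carrier_mat n m" and "j < n" and "i < m"
  shows "(transpose_mat A *\<^sub>v (c \<cdot>\<^sub>v unit_vec n j)) $ i = c * A $$ (j, i)"
  using assms by (simp add: scalar_prod_smult_right[of _ "unit_vec n j"])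

context
  fixes Y :: "real mat" and k :: nat
  assumes Y_carrier: "Y \<in> carrier_mat k k" and Y_orth: "transpose_mat Y * Y = 1\<^sub>m k"
begin

lemma orth_mult_transpose: "Y * transpose_mat Y = 1\<^sub>m k"
  using mat_mult_left_right_inverse[of "transpose_mat Y" k Y] Y_carrier Y_orth by simp

lemma orth_conj_carrier: "D \<in> carrier_mat k k \<Longrightarrow> Y * D * transpose_mat Y \<in> carrier_mat k k"
  using Y_carrier by (intro mult_carrier_mat[of _ k k]) auto

lemma orth_transpose_mult_conj:
  assumes E: "E \<in> carrier_mat k k"
  shows "transpose_mat Y * (Y * E * transpose_mat Y) = E * transpose_mat Y"
proof -
  have "transpose_mat Y * (Y * E * transpose_mat Y) = (transpose_mat Y * Y) * (E * transpose_mat Y)"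
    using Y_carrier E by (simp add: assoc_mult_mat[of _ k k _ k _ k])
  then show ?thesis
    using Y_carrier E Y_orth by simp
qed

lemma orth_conj_mult_orth:
  assumes E: "E \<in> carrier_mat k k"
  shows "(Y * E * transpose_mat Y) * Y = Y * E"
proof -
  have "(Y * E * transpose_mat Y) * Y = (Y * E) * (transpose_mat Y * Y)"
    using Y_carrier E by (simp add: assoc_mult_mat[of _ k k _ k _ k])
  then show ?thesis
    using Y_carrier E Y_orth by simp
qed

lemma orth_conj_mult:
  assumes D: "D \<in> carrier_mat k k" and E: "E \<in> carrier_mat k k"
  shows "(Y * D * transpose_mat Y) * (Y * E * transpose_mat Y) = Y * (D * E) * transpose_mat Y"
proof -
  have "(Y * D * transpose_mat Y) * (Y * E * transpose_mat Y)
      = (Y * D) * (transpose_mat Y * (Y * E * transpose_mat Y))"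
    using Y_carrier D E by (simp add: assoc_mult_mat[of _ k k _ k _ k])
  also have "\<dots> = (Y * D) * (E * transpose_mat Y)"
    using E by (simp only: orth_transpose_mult_conj)
  also have "\<dots> = Y * (D * E) * transpose_mat Y"
    using Y_carrier D E by (simp add: assoc_mult_mat[of _ k k _ k _ k])
  finally show ?thesis .
qed

lemma orth_conj_diag_transpose:
  "transpose_mat (Y * mat_diag k d * transpose_mat Y) = Y * mat_diag k d * transpose_mat Y"
proof -
  have "transpose_mat (Y * mat_diag k d * transpose_mat Y)
      = transpose_mat (transpose_mat Y) * transpose_mat (Y * mat_diag k d)"
    using Y_carrier by (intro transpose_mult[of _ k k]) auto
  also have "\<dots> = Y * (transpose_mat (mat_diag k d) * transpose_mat Y)"
    using Y_carrier by (simp add: transpose_mult[of Y k k "mat_diag k d" k])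
  also have "\<dots> = Y * mat_diag k d * transpose_mat Y"
    using Y_carrier by (simp add: transpose_mat_diag assoc_mult_mat[of _ k k _ k _ k])
  finally show ?thesis .
qed

lemma orth_conj_diag_minus_smult_one:
  "Y * mat_diag k d * transpose_mat Y - c \<cdot>\<^sub>m 1\<^sub>m k
     = Y * mat_diag k (\<lambda>i. d i - c) * transpose_mat Y"
proof -
  have "Y * mat_diag k (\<lambda>i. d i - c) = Y * mat_diag k d - c \<cdot>\<^sub>m Y"
    using Y_carrier
    by (simp add: mat_diag_minus_smult_one[symmetric] mult_minus_distrib_mat[of Y k k _ k]
        mult_smult_distrib[of Y k k "1\<^sub>m k" k])
  then have "Y * mat_diag k (\<lambda>i. d i - c) * transpose_mat Y
      = Y * mat_diag k d * transpose_mat Y - c \<cdot>\<^sub>m (Y * transpose_mat Y)"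
    using Y_carrier
    by (simp add: minus_mult_distrib_mat[of _ k k _ "transpose_mat Y" k]
        mult_smult_assoc_mat[of Y k k "transpose_mat Y" k])
  then show ?thesis
    by (simp add: orth_mult_transpose)
qed

lemma orth_conj_diag_mult_inverse:
  assumes "\<And>i. i < k \<Longrightarrow> d i * e i = 1"
  shows "(Y * mat_diag k d * transpose_mat Y) * (Y * mat_diag k e * transpose_mat Y) = 1\<^sub>m k"
proof -
  have "mat_diag k (\<lambda>i. d i * e i) = 1\<^sub>m k"
    using assms by (simp add: mat_diag_cong[of k _ "\<lambda>_. 1"])
  then show ?thesis
    unfolding orth_conj_mult[OF mat_diag_dim mat_diag_dim] mat_diag_diag
    using Y_carrier by (simp add: orth_mult_transpose)
qed

lemma minv_orth_conj_diag:
  assumes "\<And>i. i < k \<Longrightarrow> d i \<noteq> 0"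
  shows "minv (Y * mat_diag k d * transpose_mat Y) = Y * mat_diag k (\<lambda>i. 1 / d i) * transpose_mat Y"
  by (rule minv_eqI[where n = k])
    (auto intro!: orth_conj_carrier orth_conj_diag_mult_inverse simp: assms)

lemma orth_transpose_sq_norm:
  assumes "x \<in> carrier_vec k"
  shows "(transpose_mat Y *\<^sub>v x) \<bullet> (transpose_mat Y *\<^sub>v x) = x \<bullet> x"
  using transpose_vec_mult_scalar[of Y k k "transpose_mat Y *\<^sub>v x" x] assms Y_carrier
  by (simp add: assoc_mult_mat_vec[symmetric, of _ k k _ k] orth_mult_transpose)

lemma orth_conj_diag_solution_index:
  assumes "(Y * mat_diag k d * transpose_mat Y) *\<^sub>v x = b" and x: "x \<in> carrier_vec k" and "i < k"
  shows "d i * (transpose_mat Y *\<^sub>v x) $ i = (transpose_mat Y *\<^sub>v b) $ i"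
proof -
  have "transpose_mat Y *\<^sub>v b = (transpose_mat Y * (Y * mat_diag k d * transpose_mat Y)) *\<^sub>v x"
    using assms(1) Y_carrier x by (subst assoc_mult_mat_vec[of _ k k _ k]) auto
  also have "\<dots> = (mat_diag k d * transpose_mat Y) *\<^sub>v x"
    by (simp only: orth_transpose_mult_conj[OF mat_diag_dim])
  also have "\<dots> = mat_diag k d *\<^sub>v (transpose_mat Y *\<^sub>v x)"
    using Y_carrier x by (intro assoc_mult_mat_vec[of _ k k _ k]) auto
  finally show ?thesis
    using assms Y_carrier by (simp add: mat_diag_mult_vec_index)
qed

lemma orth_conj_diag_solution_sq_norm:
  assumes "(Y * mat_diag k d * transpose_mat Y) *\<^sub>v x = b" and x: "x \<in> carrier_vec k"
    and d: "\<And>i. i < k \<Longrightarrow> d i \<noteq> 0"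
  shows "x \<bullet> x = (\<Sum>i<k. (transpose_mat Y *\<^sub>v b) $ i ^ 2 / d i ^ 2)"
proof -
  let ?z = "transpose_mat Y *\<^sub>v x"
  have "x \<bullet> x = (\<Sum>i<k. ?z $ i ^ 2)"
    using orth_transpose_sq_norm[OF x] Y_carrier
    by (simp add: scalar_prod_def power2_eq_square lessThan_atLeast0)
  also have "\<dots> = (\<Sum>i<k. (transpose_mat Y *\<^sub>v b) $ i ^ 2 / d i ^ 2)"
  proof (rule sum.cong[OF refl])
    fix i assume "i \<in> {..<k}"
    then have "?z $ i = (transpose_mat Y *\<^sub>v b) $ i / d i"
      using orth_conj_diag_solution_index[OF assms(1) x] d by (simp add: eq_divide_eq mult.commute)
    then show "?z $ i ^ 2 = (transpose_mat Y *\<^sub>v b) $ i ^ 2 / d i ^ 2"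
      by (simp add: power_divide)
  qed
  finally show ?thesis .
qed

lemma orth_conj_diag_mult_col:
  assumes "i < k"
  shows "(Y * mat_diag k d * transpose_mat Y) *\<^sub>v col Y i = d i \<cdot>\<^sub>v col Y i"
proof -
  have "(Y * mat_diag k d * transpose_mat Y) *\<^sub>v col Y i
      = col ((Y * mat_diag k d * transpose_mat Y) * Y) i"
    using col_mult2[of "Y * mat_diag k d * transpose_mat Y" k k Y k i] Y_carrier assms
      orth_conj_carrier[OF mat_diag_dim] by simp
  also have "\<dots> = col (Y * mat_diag k d) i"
    by (simp only: orth_conj_mult_orth[OF mat_diag_dim])
  also have "\<dots> = d i \<cdot>\<^sub>v col Y i"
    using Y_carrier assms by (intro eq_vecI) (auto simp: mat_diag_mult_right[of _ k k])
  finally show ?thesis .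
qed

lemma orth_col_nonzero:
  assumes "i < k"
  shows "col Y i \<noteq> 0\<^sub>v k"
proof
  assume "col Y i = 0\<^sub>v k"
  then have "(transpose_mat Y * Y) $$ (i, i) = 0"
    using Y_carrier assms by simp
  then show False
    using Y_orth assms by simp
qed

lemma orth_conj_diag_minv_carrier:
  assumes "\<And>i. i < k \<Longrightarrow> d i \<noteq> 0"
  shows "minv (Y * mat_diag k d * transpose_mat Y) \<in> carrier_mat k k"
  by (simp add: minv_orth_conj_diag[OF assms] orth_conj_carrier)

lemma orth_conj_diag_mult_minv_mult_vec:
  assumes d: "\<And>i. i < k \<Longrightarrow> d i \<noteq> 0" and b: "b \<in> carrier_vec k"
  shows "(Y * mat_diag k d * transpose_mat Y) *\<^sub>v (minv (Y * mat_diag k d * transpose_mat Y) *\<^sub>v b)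
    = b"
proof -
  have "(Y * mat_diag k d * transpose_mat Y) *\<^sub>v (minv (Y * mat_diag k d * transpose_mat Y) *\<^sub>v b)
      = ((Y * mat_diag k d * transpose_mat Y) * minv (Y * mat_diag k d * transpose_mat Y)) *\<^sub>v b"
    by (rule assoc_mult_mat_vec[symmetric, of _ k k _ k])
      (simp_all add: b orth_conj_carrier orth_conj_diag_minv_carrier[of d, OF d])
  then show ?thesis
    using b d by (simp add: minv_orth_conj_diag[OF d] orth_conj_diag_mult_inverse)
qed

lemma orth_conj_diag_minv_mult_vec_sq_norm:
  assumes d: "\<And>i. i < k \<Longrightarrow> d i \<noteq> 0" and b: "b \<in> carrier_vec k"
  defines "R \<equiv> minv (Y * mat_diag k d * transpose_mat Y)"
  shows "(R *\<^sub>v b) \<bullet> (R *\<^sub>v b) = (\<Sum>i<k. (transpose_mat Y *\<^sub>v b) $ i ^ 2 / d i ^ 2)"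
  unfolding R_def
  using orth_conj_diag_mult_minv_mult_vec[OF d b] orth_conj_diag_minv_carrier[of d, OF d] b
  by (intro orth_conj_diag_solution_sq_norm[OF _ _ d]) auto

lemma orth_conj_diag_minv_sq_quadratic_form:
  assumes d: "\<And>i. i < k \<Longrightarrow> d i \<noteq> 0" and b: "b \<in> carrier_vec k"
  shows "b \<bullet> ((minv (Y * mat_diag k d * transpose_mat Y) ^\<^sub>m 2) *\<^sub>v b)
    = (\<Sum>i<k. (transpose_mat Y *\<^sub>v b) $ i ^ 2 / d i ^ 2)"
proof -
  define R where "R = minv (Y * mat_diag k d * transpose_mat Y)"
  have R: "R \<in> carrier_mat k k" and R_sym: "transpose_mat R = R"
    unfolding R_def using orth_conj_diag_minv_carrier[of d, OF d]
    by (simp_all add: minv_orth_conj_diag[OF d] orth_conj_diag_transpose)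
  have "b \<bullet> ((R ^\<^sub>m 2) *\<^sub>v b) = b \<bullet> (R *\<^sub>v (R *\<^sub>v b))"
    using R b by (simp add: numeral_2_eq_2)
  also have "\<dots> = (transpose_mat R *\<^sub>v b) \<bullet> (R *\<^sub>v b)"
    using R b by (simp add: transpose_vec_mult_scalar[of R k k])
  also have "\<dots> = (R *\<^sub>v b) \<bullet> (R *\<^sub>v b)"
    by (simp only: R_sym)
  also have "\<dots> = (\<Sum>i<k. (transpose_mat Y *\<^sub>v b) $ i ^ 2 / d i ^ 2)"
    unfolding R_def by (rule orth_conj_diag_minv_mult_vec_sq_norm[OF d b])
  finally show ?thesis
    by (simp add: R_def)
qed

end

lemma hessenberg_eigenvector_first_nonzero:
  fixes A :: "'a :: idom mat"
  assumes A: "A \<in> carrier_mat k k"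
    and zero_above: "\<And>i j. j < k \<Longrightarrow> Suc i < j \<Longrightarrow> A $$ (i, j) = 0"
    and superdiag: "\<And>i. Suc i < k \<Longrightarrow> A $$ (i, Suc i) \<noteq> 0"
    and eig: "A *\<^sub>v v = t \<cdot>\<^sub>v v" and v: "v \<in> carrier_vec k" and v_nz: "v \<noteq> 0\<^sub>v k"
  shows "v $ 0 \<noteq> 0"
proof
  assume v0: "v $ 0 = 0"
  have "\<forall>j\<le>m. v $ j = 0" if "m < k" for m
    using that
  proof (induction m)
    case 0
    then show ?case using v0 by simp
  next
    case (Suc m)
    then have IH: "\<forall>j\<le>m. v $ j = 0" by simp
    have "row A m \<bullet> v = (A *\<^sub>v v) $ m"
      using A Suc.prems by simp
    also have "\<dots> = t * v $ m"
      using eig v Suc.prems by simp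
    also have "\<dots> = 0" using IH by simp
    finally have "0 = (\<Sum>l\<in>{0..<k}. A $$ (m, l) * v $ l)"
      using A v Suc.prems by (simp add: scalar_prod_def)
    also have "\<dots> = (\<Sum>l\<in>{0..<k}. if l = Suc m then A $$ (m, Suc m) * v $ Suc m else 0)"
    proof (rule sum.cong[OF refl])
      fix l assume l: "l \<in> {0..<k}"
      consider "l \<le> m" | "l = Suc m" | "Suc m < l" by linarith
      then show "A $$ (m, l) * v $ l = (if l = Suc m then A $$ (m, Suc m) * v $ Suc m else 0)"
        by cases (use IH zero_above l in auto)
    qed
    also have "\<dots> = A $$ (m, Suc m) * v $ Suc m"
      using Suc.prems by simp
    finally have "v $ Suc m = 0"
      using superdiag[OF Suc.prems] by simp
    then show ?case
      using IH le_Suc_eq by auto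
  qed
  then have "v = 0\<^sub>v k"
    using v by (intro eq_vecI) auto
  then show False
    using v_nz by contradiction
qed

(* The secular function of the paper is secular k zeta theta - gamma^2. *)
definition secular :: "nat \<Rightarrow> (nat \<Rightarrow> real) \<Rightarrow> (nat \<Rightarrow> real) \<Rightarrow> real \<Rightarrow> real" where
  "secular k \<zeta> \<theta> r = (\<Sum>i<k. \<zeta> i ^ 2 / (r - \<theta> i) ^ 2)"

lemma secular_strict_mono_below_spectrum:
  assumes "r < s" and below: "\<And>i. i < k \<Longrightarrow> s < \<theta> i" and "j < k" and "\<zeta> j \<noteq> 0"
  shows "secular k \<zeta> \<theta> r < secular k \<zeta> \<theta> s"
  unfolding secular_def
proof (rule sum_strict_mono_ex1)
  have sq: "(s - \<theta> i) ^ 2 < (r - \<theta> i) ^ 2" "0 < (r - \<theta> i) ^ 2 * (s - \<theta> i) ^ 2"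
    if "i < k" for i
  proof -
    have "0 < \<theta> i - s" "\<theta> i - s < \<theta> i - r"
      using below[OF that] \<open>r < s\<close> by auto
    then have "0 < (\<theta> i - s) ^ 2" "(\<theta> i - s) ^ 2 < (\<theta> i - r) ^ 2"
      by (simp_all add: power_strict_mono)
    moreover from this have "0 < (\<theta> i - r) ^ 2"
      by linarith
    ultimately show "(s - \<theta> i) ^ 2 < (r - \<theta> i) ^ 2" "0 < (r - \<theta> i) ^ 2 * (s - \<theta> i) ^ 2"
      by (simp_all add: power2_commute[of _ "\<theta> i"])
  qed
  show "\<forall>i\<in>{..<k}. \<zeta> i ^ 2 / (r - \<theta> i) ^ 2 \<le> \<zeta> i ^ 2 / (s - \<theta> i) ^ 2"
  proof
    fix i assume "i \<in> {..<k}"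
    then show "\<zeta> i ^ 2 / (r - \<theta> i) ^ 2 \<le> \<zeta> i ^ 2 / (s - \<theta> i) ^ 2"
      using sq[of i] by (intro divide_left_mono) auto
  qed
  show "\<exists>i\<in>{..<k}. \<zeta> i ^ 2 / (r - \<theta> i) ^ 2 < \<zeta> i ^ 2 / (s - \<theta> i) ^ 2"
    using sq[OF \<open>j < k\<close>] \<open>j < k\<close> \<open>\<zeta> j \<noteq> 0\<close> by (auto intro!: bexI[of _ j] divide_strict_left_mono)
qed simp

lemma secular_ge_term: "j < k \<Longrightarrow> \<zeta> j ^ 2 / (r - \<theta> j) ^ 2 \<le> secular k \<zeta> \<theta> r"
  unfolding secular_def by (rule member_le_sum) auto

lemma secular_le_below_spectrum:
  assumes "0 < d" and gap: "\<And>i. i < k \<Longrightarrow> r + d \<le> \<theta> i"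
  shows "secular k \<zeta> \<theta> r \<le> (\<Sum>i<k. \<zeta> i ^ 2) / d ^ 2"
  unfolding secular_def sum_divide_distrib
proof (rule sum_mono)
  fix i assume "i \<in> {..<k}"
  then have "d \<le> \<theta> i - r"
    using gap by (simp add: algebra_simps)
  then have "d ^ 2 \<le> (r - \<theta> i) ^ 2"
    using \<open>0 < d\<close> by (simp add: power2_commute[of r] power_mono)
  moreover have "0 < d ^ 2"
    using \<open>0 < d\<close> by simp
  ultimately show "\<zeta> i ^ 2 / (r - \<theta> i) ^ 2 \<le> \<zeta> i ^ 2 / d ^ 2"
    by (intro divide_left_mono mult_pos_pos) auto
qed

lemma continuous_on_secular:
  "(\<And>x i. x \<in> S \<Longrightarrow> i < k \<Longrightarrow> x \<noteq> \<theta> i) \<Longrightarrow> continuous_on S (secular k \<zeta> \<theta>)"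
  unfolding secular_def by (intro continuous_intros) auto

lemma secular_least_root:
  assumes "0 < \<gamma>" and "0 < k" and \<zeta>_nz: "\<And>i. i < k \<Longrightarrow> \<zeta> i \<noteq> 0"
  obtains \<mu> where "\<And>i. i < k \<Longrightarrow> \<mu> < \<theta> i" and "secular k \<zeta> \<theta> \<mu> = \<gamma> ^ 2"
    and "\<And>r. secular k \<zeta> \<theta> r = \<gamma> ^ 2 \<Longrightarrow> \<mu> \<le> r"
proof -
  have "Min (\<theta> ` {..<k}) \<in> \<theta> ` {..<k}"
    using \<open>0 < k\<close> by (intro Min_in) auto
  then obtain j where j: "j < k" and j_Min: "\<theta> j = Min (\<theta> ` {..<k})"
    by auto
  have j_min: "\<theta> j \<le> \<theta> i" if "i < k" for i
    using that by (simp add: j_Min)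
  define S where "S = (\<Sum>i<k. \<zeta> i ^ 2)"
  \<comment> \<open>At hi the j-th term alone equals gamma^2; from lo the spectrum is at distance at least
    (S + 1) / gamma, which makes every term small.\<close>
  define hi where "hi = \<theta> j - \<bar>\<zeta> j\<bar> / \<gamma>"
  define lo where "lo = hi - (S + 1) / \<gamma>"
  have "0 \<le> S"
    by (simp add: S_def sum_nonneg)
  have "0 < \<bar>\<zeta> j\<bar> / \<gamma>"
    using \<zeta>_nz[OF j] \<open>0 < \<gamma>\<close> by simp
  then have hi_below: "hi < \<theta> i" if "i < k" for i
    using j_min[OF that] by (simp add: hi_def)
  have "\<gamma> ^ 2 = \<zeta> j ^ 2 / (hi - \<theta> j) ^ 2"
    using \<zeta>_nz[OF j] \<open>0 < \<gamma>\<close> by (simp add: hi_def power_divide)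
  also have "\<dots> \<le> secular k \<zeta> \<theta> hi"
    using j by (rule secular_ge_term)
  finally have at_hi: "\<gamma> ^ 2 \<le> secular k \<zeta> \<theta> hi" .
  have "secular k \<zeta> \<theta> lo \<le> S / ((S + 1) / \<gamma>) ^ 2"
    unfolding S_def using \<open>0 \<le> S\<close> \<open>0 < \<gamma>\<close> hi_below
    by (intro secular_le_below_spectrum) (auto simp: lo_def S_def less_imp_le)
  also have "\<dots> = \<gamma> ^ 2 * (S / (S + 1) ^ 2)"
    by (simp add: power_divide)
  also have "\<dots> \<le> \<gamma> ^ 2"
  proof (rule mult_left_le)
    have "S \<le> (S + 1) ^ 2"
      using \<open>0 \<le> S\<close> mult_nonneg_nonneg[of S S] by (simp add: power2_eq_square algebra_simps)
    then show "S / (S + 1) ^ 2 \<le> 1"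
      using \<open>0 \<le> S\<close> by (simp add: divide_le_eq_1)
  qed simp
  finally have at_lo: "secular k \<zeta> \<theta> lo \<le> \<gamma> ^ 2" .
  have "lo \<le> hi"
    using \<open>0 \<le> S\<close> \<open>0 < \<gamma>\<close> by (simp add: lo_def)
  moreover have "continuous_on {lo..hi} (secular k \<zeta> \<theta>)"
  proof (rule continuous_on_secular)
    fix x i assume "x \<in> {lo..hi}" and "i < k"
    then show "x \<noteq> \<theta> i"
      using hi_below[of i] by auto
  qed
  ultimately obtain \<mu> where "lo \<le> \<mu>" "\<mu> \<le> hi" and root: "secular k \<zeta> \<theta> \<mu> = \<gamma> ^ 2"
    using IVT'[of "secular k \<zeta> \<theta>" lo "\<gamma> ^ 2" hi] at_lo at_hi by blast
  have below: "\<mu> < \<theta> i" if "i < k" for i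
    using hi_below[OF that] \<open>\<mu> \<le> hi\<close> by simp
  have least: "\<mu> \<le> r" if "secular k \<zeta> \<theta> r = \<gamma> ^ 2" for r
  proof (rule ccontr)
    assume "\<not> \<mu> \<le> r"
    then have "secular k \<zeta> \<theta> r < secular k \<zeta> \<theta> \<mu>"
      using below j \<zeta>_nz[OF j] by (intro secular_strict_mono_below_spectrum) auto
    then show False
      using that root by simp
  qed
  show ?thesis
    by (rule that[OF below root least])
qed

lemma lanczos_T_carrier: "lanczos_T M b0 k \<in> carrier_mat k k"
  by (simp add: lanczos_T_def)

lemma lanczos_T_zero_above: "j < k \<Longrightarrow> Suc i < j \<Longrightarrow> lanczos_T M b0 k $$ (i, j) = 0"
  by (simp add: lanczos_T_def)

lemma lanczos_T_superdiag: "Suc i < k \<Longrightarrow> lanczos_T M b0 k $$ (i, Suc i) = lanczos_beta M b0 (i + 2)"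
  by (simp add: lanczos_T_def)

context
  fixes Y :: "real mat" and k :: nat and \<theta> :: "nat \<Rightarrow> real" and M :: "real mat" and b0 :: "real vec"
  assumes Y_carrier: "Y \<in> carrier_mat k k" and Y_orth: "transpose_mat Y * Y = 1\<^sub>m k"
    and T_diag: "lanczos_T M b0 k = Y * mat_diag k \<theta> * transpose_mat Y"
begin

lemma lanczos_shift_diag:
  "lanczos_T M b0 k - c \<cdot>\<^sub>m 1\<^sub>m k = Y * mat_diag k (\<lambda>i. \<theta> i - c) * transpose_mat Y"
  unfolding T_diag by (rule orth_conj_diag_minus_smult_one[OF Y_carrier Y_orth])

lemma lanczos_eigenbasis_first_row_nonzero:
  assumes beta_nz: "\<And>j. 2 \<le> j \<Longrightarrow> j \<le> k \<Longrightarrow> lanczos_beta M b0 j \<noteq> 0" and "i < k"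
  shows "Y $$ (0, i) \<noteq> 0"
proof -
  have "col Y i $ 0 \<noteq> 0"
  proof (rule hessenberg_eigenvector_first_nonzero[OF lanczos_T_carrier lanczos_T_zero_above])
    show "lanczos_T M b0 k $$ (j, Suc j) \<noteq> 0" if "Suc j < k" for j
      using that beta_nz[of "j + 2"] by (simp add: lanczos_T_superdiag)
    show "lanczos_T M b0 k *\<^sub>v col Y i = \<theta> i \<cdot>\<^sub>v col Y i"
      unfolding T_diag using Y_carrier Y_orth \<open>i < k\<close> by (rule orth_conj_diag_mult_col)
    show "col Y i \<noteq> 0\<^sub>v k"
      using Y_carrier Y_orth \<open>i < k\<close> by (rule orth_col_nonzero)
  qed (use Y_carrier \<open>i < k\<close> in auto)
  then show ?thesis
    using Y_carrier \<open>i < k\<close> by simp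
qed

lemma lanczos_resolvent_quadratic_form:
  assumes "0 < k" and off_spectrum: "\<And>i. i < k \<Longrightarrow> lam \<noteq> \<theta> i"
  shows "vnorm b0 ^ 2 * (unit_vec k 0 \<bullet>
      ((minv (lanczos_T M b0 k - lam \<cdot>\<^sub>m 1\<^sub>m k) ^\<^sub>m 2) *\<^sub>v unit_vec k 0))
    = secular k (\<lambda>i. vnorm b0 * Y $$ (0, i)) \<theta> lam"
proof -
  have "unit_vec k 0 \<bullet> ((minv (lanczos_T M b0 k - lam \<cdot>\<^sub>m 1\<^sub>m k) ^\<^sub>m 2) *\<^sub>v unit_vec k 0)
      = (\<Sum>i<k. (transpose_mat Y *\<^sub>v unit_vec k 0) $ i ^ 2 / (\<theta> i - lam) ^ 2)"
    unfolding lanczos_shift_diag using off_spectrum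
    by (intro orth_conj_diag_minv_sq_quadratic_form[OF Y_carrier Y_orth]) auto
  also have "\<dots> = (\<Sum>i<k. Y $$ (0, i) ^ 2 / (lam - \<theta> i) ^ 2)"
    using Y_carrier \<open>0 < k\<close> by (intro sum.cong) (auto simp: power2_commute[of lam])
  finally show ?thesis
    by (simp add: secular_def sum_distrib_left power_mult_distrib)
qed

lemma rLGopt_feasible_secular:
  assumes \<zeta>_nz: "\<And>i. i < k \<Longrightarrow> vnorm b0 * Y $$ (0, i) \<noteq> 0"
    and feasible: "(lam, x) \<in> rLGopt_feasible M b0 \<gamma> k"
  shows "secular k (\<lambda>i. vnorm b0 * Y $$ (0, i)) \<theta> lam = \<gamma> ^ 2"
proof -
  have x: "x \<in> carrier_vec k" and "vnorm x = \<gamma>"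
    and eq: "(Y * mat_diag k (\<lambda>i. \<theta> i - lam) * transpose_mat Y) *\<^sub>v x
      = (- vnorm b0) \<cdot>\<^sub>v unit_vec k 0"
    using feasible by (simp_all add: rLGopt_feasible_def lanczos_shift_diag)
  have rhs: "(transpose_mat Y *\<^sub>v ((- vnorm b0) \<cdot>\<^sub>v unit_vec k 0)) $ i = - (vnorm b0 * Y $$ (0, i))"
    if "i < k" for i
    using Y_carrier that by (simp add: transpose_mult_smult_unit_vec_index)
  have off_spectrum: "\<theta> i - lam \<noteq> 0" if "i < k" for i
    using orth_conj_diag_solution_index[OF Y_carrier Y_orth eq x that] rhs[OF that] \<zeta>_nz[OF that]
    by auto
  have "0 \<le> \<gamma>"
    using \<open>vnorm x = \<gamma>\<close> scalar_prod_self_nonneg[of x] by (auto simp: vnorm_def)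
  then have "\<gamma> ^ 2 = x \<bullet> x"
    using \<open>vnorm x = \<gamma>\<close> vnorm_eq_iff by metis
  also have "\<dots>
      = (\<Sum>i<k. (transpose_mat Y *\<^sub>v ((- vnorm b0) \<cdot>\<^sub>v unit_vec k 0)) $ i ^ 2 / (\<theta> i - lam) ^ 2)"
    by (rule orth_conj_diag_solution_sq_norm[OF Y_carrier Y_orth eq x off_spectrum])
  also have "\<dots> = secular k (\<lambda>i. vnorm b0 * Y $$ (0, i)) \<theta> lam"
    unfolding secular_def using rhs by (intro sum.cong) (auto simp: power2_commute[of lam])
  finally show ?thesis ..
qed

lemma rLGopt_feasible_resolvent:
  assumes off_spectrum: "\<And>i. i < k \<Longrightarrow> \<mu> \<noteq> \<theta> i"
    and root: "secular k (\<lambda>i. vnorm b0 * Y $$ (0, i)) \<theta> \<mu> = \<gamma> ^ 2" and "0 \<le> \<gamma>"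
  shows "(\<mu>, (- vnorm b0) \<cdot>\<^sub>v (minv (lanczos_T M b0 k - \<mu> \<cdot>\<^sub>m 1\<^sub>m k) *\<^sub>v unit_vec k 0))
    \<in> rLGopt_feasible M b0 \<gamma> k"
proof -
  define D where "D = lanczos_T M b0 k - \<mu> \<cdot>\<^sub>m 1\<^sub>m k"
  define b where "b = (- vnorm b0) \<cdot>\<^sub>v unit_vec k 0"
  have d: "\<And>i. i < k \<Longrightarrow> \<theta> i - \<mu> \<noteq> 0"
    using off_spectrum by auto
  have D: "D = Y * mat_diag k (\<lambda>i. \<theta> i - \<mu>) * transpose_mat Y"
    unfolding D_def by (rule lanczos_shift_diag)
  have b_carrier: "b \<in> carrier_vec k"
    by (simp add: b_def)
  have R_carrier: "minv D \<in> carrier_mat k k"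
    unfolding D by (rule orth_conj_diag_minv_carrier[OF Y_carrier Y_orth d])
  have "D *\<^sub>v (minv D *\<^sub>v b) = b"
    unfolding D by (rule orth_conj_diag_mult_minv_mult_vec[OF Y_carrier Y_orth d b_carrier])
  moreover have "(minv D *\<^sub>v b) \<bullet> (minv D *\<^sub>v b) = \<gamma> ^ 2"
  proof -
    have "(minv D *\<^sub>v b) \<bullet> (minv D *\<^sub>v b) = (\<Sum>i<k. (transpose_mat Y *\<^sub>v b) $ i ^ 2 / (\<theta> i - \<mu>) ^ 2)"
      unfolding D by (rule orth_conj_diag_minv_mult_vec_sq_norm[OF Y_carrier Y_orth d b_carrier])
    also have "\<dots> = secular k (\<lambda>i. vnorm b0 * Y $$ (0, i)) \<theta> \<mu>"
      unfolding secular_def using Y_carrier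
      by (intro sum.cong)
        (auto simp: b_def transpose_mult_smult_unit_vec_index power2_commute[of \<mu>])
    finally show ?thesis
      using root by simp
  qed
  moreover have "minv D *\<^sub>v b \<in> carrier_vec k"
    using R_carrier b_carrier by simp
  moreover have "(- vnorm b0) \<cdot>\<^sub>v (minv D *\<^sub>v unit_vec k 0) = minv D *\<^sub>v b"
    by (simp add: b_def mult_mat_vec[OF R_carrier])
  moreover have "(\<mu>, x) \<in> rLGopt_feasible M b0 \<gamma> k \<longleftrightarrow> x \<in> carrier_vec k \<and> D *\<^sub>v x = b \<and> vnorm x = \<gamma>"
    for x
    by (simp add: rLGopt_feasible_def D_def b_def)
  ultimately show ?thesis
    unfolding D_def[symmetric] using \<open>0 \<le> \<gamma>\<close> by (simp add: vnorm_eq_iff)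
qed

end

theorem theorem3p2:
  fixes M :: "real mat" and b0 :: "real vec" and \<gamma> :: real and n k :: nat
    and Y :: "real mat" and \<theta> :: "nat \<Rightarrow> real"
  assumes M_carrier: "M \<in> carrier_mat n n"
    and M_sym: "transpose_mat M = M"
    and b0_carrier: "b0 \<in> carrier_vec n"
    and b0_nz: "b0 \<noteq> 0\<^sub>v n"
    and gamma_pos: "\<gamma> > 0"
    and k_pos: "k \<ge> 1"
    and beta_nz: "\<And>j. 2 \<le> j \<Longrightarrow> j \<le> k \<Longrightarrow> lanczos_beta M b0 j \<noteq> 0"
    and Y_carrier: "Y \<in> carrier_mat k k"
    and Y_orth: "transpose_mat Y * Y = 1\<^sub>m k"
    and T_eig: "lanczos_T M b0 k =
                  Y * mat k k (\<lambda>(i, j). if i = j then \<theta> i else 0) * transpose_mat Y"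
  shows
    "(\<forall>lam. (\<forall>i<k. lam \<noteq> \<theta> i) \<longrightarrow>
        vnorm b0 ^ 2 * (unit_vec k 0 \<bullet> ((minv (lanczos_T M b0 k - lam \<cdot>\<^sub>m 1\<^sub>m k) ^\<^sub>m 2)
                                          *\<^sub>v unit_vec k 0)) - \<gamma> ^ 2
        = (\<Sum>i<k. (vnorm b0 * Y $$ (0, i)) ^ 2 / (lam - \<theta> i) ^ 2) - \<gamma> ^ 2)
     \<and> (\<exists>\<mu>.
          \<comment> \<open>mu is the smallest root of the secular function\<close>
          ((\<forall>i<k. \<mu> \<noteq> \<theta> i) \<and>
           (\<Sum>i<k. (vnorm b0 * Y $$ (0, i)) ^ 2 / (\<mu> - \<theta> i) ^ 2) - \<gamma> ^ 2 = 0) \<and>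
          (\<forall>r. (\<forall>i<k. r \<noteq> \<theta> i) \<and>
               (\<Sum>i<k. (vnorm b0 * Y $$ (0, i)) ^ 2 / (r - \<theta> i) ^ 2) - \<gamma> ^ 2 = 0
               \<longrightarrow> \<mu> \<le> r) \<and>
          \<comment> \<open>mu is the optimal value of rLGopt, attained at the stated x\<close>
          (\<forall>(lam, x) \<in> rLGopt_feasible M b0 \<gamma> k. \<mu> \<le> lam) \<and>
          (\<mu>, (- vnorm b0) \<cdot>\<^sub>v (minv (lanczos_T M b0 k - \<mu> \<cdot>\<^sub>m 1\<^sub>m k) *\<^sub>v unit_vec k 0))
             \<in> rLGopt_feasible M b0 \<gamma> k)"
proof -
  let ?\<zeta> = "\<lambda>i. vnorm b0 * Y $$ (0, i)"
  have T_diag: "lanczos_T M b0 k = Y * mat_diag k \<theta> * transpose_mat Y"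
    using T_eig by (simp add: mat_diag_eq_mat)
  have k: "0 < k"
    using k_pos by simp
  have \<zeta>_nz: "?\<zeta> i \<noteq> 0" if "i < k" for i
    using vnorm_pos[OF b0_carrier b0_nz]
      lanczos_eigenbasis_first_row_nonzero[OF Y_carrier Y_orth T_diag beta_nz that] by simp
  obtain \<mu> where below: "\<And>i. i < k \<Longrightarrow> \<mu> < \<theta> i" and root: "secular k ?\<zeta> \<theta> \<mu> = \<gamma> ^ 2"
    and least: "\<And>r. secular k ?\<zeta> \<theta> r = \<gamma> ^ 2 \<Longrightarrow> \<mu> \<le> r"
    using secular_least_root[where \<zeta> = ?\<zeta> and \<theta> = \<theta>, OF gamma_pos k \<zeta>_nz] by blast
  have off_spectrum: "\<And>i. i < k \<Longrightarrow> \<mu> \<noteq> \<theta> i"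
    using below by force
  have "\<forall>(lam, x) \<in> rLGopt_feasible M b0 \<gamma> k. \<mu> \<le> lam"
    using least rLGopt_feasible_secular[OF Y_carrier Y_orth T_diag \<zeta>_nz] by auto
  moreover have "(\<mu>, (- vnorm b0) \<cdot>\<^sub>v (minv (lanczos_T M b0 k - \<mu> \<cdot>\<^sub>m 1\<^sub>m k) *\<^sub>v unit_vec k 0))
      \<in> rLGopt_feasible M b0 \<gamma> k"
    using gamma_pos
    by (intro rLGopt_feasible_resolvent[OF Y_carrier Y_orth T_diag off_spectrum root]) auto
  ultimately show ?thesis
    unfolding secular_def[symmetric]
    using lanczos_resolvent_quadratic_form[OF Y_carrier Y_orth T_diag k] off_spectrum root least
    by (intro conjI exI[of _ \<mu>]) auto
qed

end
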